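(* Let $\alpha=(a_1,\dots,a_w)$ have $m$ nonempty horizontal lists, and let $1\le t<m$. (1) For every $a_i\in\mathrm{Left}(\mathbb{L}^t_\alpha)$, if $dn_\alpha(a_i)$ exists then $dn_\alpha(a_i)\in\mathrm{Left}(\mathbb{L}^{t+1}_\alpha)$. (2) For every $a_i\in\mathrm{Right}(\mathbb{L}^{t+1}_\alpha)$, $un_\alpha(a_i)\in\mathrm{Right}(\mathbb{L}^t_\alpha)$.
   Context: Let $\alpha=(a_1,\dots,a_w)$ be a finite sequence of real numbers, with items identified by their positions. Increasing subsequences are non-strict. $RL_\alpha(a)$ is the maximum length of an increasing subsequence ending at $a$. The horizontal list $\mathbb{L}^t_\alpha$ is the list of items of rising length $t$, ordered by position. The up neighbor $un_\alpha(a_i)$ (resp. down neighbor $dn_\alpha(a_i)$) is the item $a_j$ with the largest $j<i$ such that $RL_\alpha(a_j)=RL_\alpha(a_i)-1$ (resp. $+1$), if any. Further, $un^0_\alpha(a)=a$ and $un^k_\alpha=un_\alpha\circ un^{k-1}_\alpha$. $\mathrm{Left}(\mathbb{L}^t_\alpha)$ is the sublist of items $a\in\mathbb{L}^t_\alpha$ with $un^{t-1}_\alpha(a)=a_1$, and $\mathrm{Right}(\mathbb{L}^t_\alpha)$ is the sublist of the remaining items. *)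

theory Defs
  imports Complex_Main
begin

text \<open>Positions are 0-based: item a_i of the paper is position i-1 of the list alpha.\<close>

definition inc_subseq_ending :: "real list \<Rightarrow> nat list \<Rightarrow> nat \<Rightarrow> bool" where
  "inc_subseq_ending alpha js i \<longleftrightarrow>
     js \<noteq> [] \<and> sorted_wrt (<) js \<and> set js \<subseteq> {..<length alpha} \<and> last js = i
     \<and> sorted (map (\<lambda>j. alpha ! j) js)"

definition RL :: "real list \<Rightarrow> nat \<Rightarrow> nat" where
  "RL alpha i = Max {length js | js. inc_subseq_ending alpha js i}"

text \<open>Horizontal list L^t (as a set of positions; its order is the order of positions).\<close>
definition hlist :: "real list \<Rightarrow> nat \<Rightarrow> nat set" where
  "hlist alpha t = {i. i < length alpha \<and> RL alpha i = t}"

definition num_hlists :: "real list \<Rightarrow> nat" where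
  "num_hlists alpha = card {t. hlist alpha t \<noteq> {}}"

definition un :: "real list \<Rightarrow> nat \<Rightarrow> nat option" where
  "un alpha i = (if \<exists>j<i. RL alpha j + 1 = RL alpha i
                 then Some (GREATEST j. j < i \<and> RL alpha j + 1 = RL alpha i) else None)"

definition dn :: "real list \<Rightarrow> nat \<Rightarrow> nat option" where
  "dn alpha i = (if \<exists>j<i. RL alpha j = RL alpha i + 1
                 then Some (GREATEST j. j < i \<and> RL alpha j = RL alpha i + 1) else None)"

fun un_pow :: "real list \<Rightarrow> nat \<Rightarrow> nat \<Rightarrow> nat option" where
  "un_pow alpha 0 i = Some i"
| "un_pow alpha (Suc k) i = Option.bind (un_pow alpha k i) (un alpha)"

definition Left :: "real list \<Rightarrow> nat \<Rightarrow> nat set" where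
  "Left alpha t = {i \<in> hlist alpha t. un_pow alpha (t - 1) i = Some 0}"

definition Right :: "real list \<Rightarrow> nat \<Rightarrow> nat set" where
  "Right alpha t = {i \<in> hlist alpha t. un_pow alpha (t - 1) i \<noteq> Some 0}"

end

theory Submission
  imports Defs
begin

text \<open>An item of rising length r \<ge> 2 has an up neighbour, because the penultimate item
  of a longest increasing subsequence ending at it has rising length r - 1. Moreover un is
  monotone along a horizontal list: for k \<le> i in the same list every candidate for un k is a
  candidate for un i, and the same holds for every iterate of un. Hence if a is in
  Left(L^t) and b = dn a, then c = un b lies before a in L^t, and un^(t-1) c \<le> un^(t-1) a = a_1
  forces un^t b = un^(t-1) c = a_1. The second claim is immediate from
  un^t b = un^(t-1) (un b).\<close>

lemma inc_subseq_ending_length_le: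
  assumes "inc_subseq_ending alpha js i"
  shows "length js \<le> length alpha"
proof -
  have "distinct js" "set js \<subseteq> {..<length alpha}"
    using assms unfolding inc_subseq_ending_def by (auto simp: strict_sorted_iff)
  then show ?thesis by (metis card_lessThan card_mono distinct_card finite_lessThan)
qed

lemma inc_subseq_ending_snoc:
  assumes "inc_subseq_ending alpha js p" "p < i" "i < length alpha" "alpha ! p \<le> alpha ! i"
  shows "inc_subseq_ending alpha (js @ [i]) i"
proof -
  obtain bs where "js = bs @ [p]"
    using assms(1) unfolding inc_subseq_ending_def by (metis append_butlast_last_id)
  then show ?thesis
    using assms unfolding inc_subseq_ending_def by (auto simp: sorted_wrt_append sorted_append)
qed

lemma inc_subseq_ending_butlast:
  assumes "inc_subseq_ending alpha js i" "2 \<le> length js"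
  obtains p where "p < i" "alpha ! p \<le> alpha ! i" "inc_subseq_ending alpha (butlast js) p"
proof -
  obtain cs q where "js = cs @ [q]"
    using assms(2) by (cases js rule: rev_cases) auto
  moreover obtain bs p where "cs = bs @ [p]"
    using assms(2) calculation by (cases cs rule: rev_cases) auto
  ultimately have "js = bs @ [p, q]" by simp
  then show ?thesis
    using that assms(1) unfolding inc_subseq_ending_def
    by (auto simp: sorted_wrt_append sorted_append butlast_append)
qed

lemma finite_inc_subseq_lengths: "finite {length js | js. inc_subseq_ending alpha js i}"
  by (rule finite_subset[of _ "{..length alpha}"]) (auto dest: inc_subseq_ending_length_le)

lemma length_le_RL: "inc_subseq_ending alpha js i \<Longrightarrow> length js \<le> RL alpha i"
  unfolding RL_def by (rule Max_ge[OF finite_inc_subseq_lengths]) auto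

lemma RL_attained:
  assumes "i < length alpha"
  obtains js where "inc_subseq_ending alpha js i" "length js = RL alpha i"
proof -
  have "inc_subseq_ending alpha [i] i"
    using assms unfolding inc_subseq_ending_def by auto
  then have "{length js | js. inc_subseq_ending alpha js i} \<noteq> {}" by blast
  from Max_in[OF finite_inc_subseq_lengths this] show ?thesis
    using that unfolding RL_def by auto
qed

lemma RL_predecessor:
  assumes "i < length alpha" "2 \<le> RL alpha i"
  shows "\<exists>p<i. RL alpha p + 1 = RL alpha i"
proof -
  obtain js where js: "inc_subseq_ending alpha js i" "length js = RL alpha i"
    using RL_attained[OF assms(1)] .
  obtain p where p: "p < i" "alpha ! p \<le> alpha ! i" "inc_subseq_ending alpha (butlast js) p"
    using inc_subseq_ending_butlast[OF js(1)] js(2) assms(2) by auto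
  have "RL alpha i \<le> RL alpha p + 1"
    using length_le_RL[OF p(3)] js(2) by simp
  moreover obtain ks where ks: "inc_subseq_ending alpha ks p" "length ks = RL alpha p"
    using RL_attained[of p alpha] p(1) assms(1) by auto
  have "length (ks @ [i]) \<le> RL alpha i"
    using length_le_RL[OF inc_subseq_ending_snoc[OF ks(1) p(1) assms(1) p(2)]] .
  then have "RL alpha p + 1 \<le> RL alpha i"
    using ks(2) by simp
  ultimately show ?thesis using p(1) by auto
qed

lemma GREATEST_less_nat:
  assumes "k < (i::nat)" "Q k"
  shows "(GREATEST j. j < i \<and> Q j) < i" "Q (GREATEST j. j < i \<and> Q j)"
    "k \<le> (GREATEST j. j < i \<and> Q j)"
  using GreatestI_nat[of "\<lambda>j. j < i \<and> Q j" k i]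
    Greatest_le_nat[of "\<lambda>j. j < i \<and> Q j" k i] assms by auto

lemma un_SomeD:
  assumes "un alpha i = Some j"
  shows "j < i" "RL alpha j + 1 = RL alpha i"
    "\<And>k. k < i \<Longrightarrow> RL alpha k + 1 = RL alpha i \<Longrightarrow> k \<le> j"
proof -
  obtain k where "k < i" "RL alpha k + 1 = RL alpha i"
    and "j = (GREATEST j. j < i \<and> RL alpha j + 1 = RL alpha i)"
    using assms unfolding un_def by (auto split: if_splits)
  then show "j < i" "RL alpha j + 1 = RL alpha i"
    "\<And>k. k < i \<Longrightarrow> RL alpha k + 1 = RL alpha i \<Longrightarrow> k \<le> j"
    using GREATEST_less_nat[where Q = "\<lambda>j. RL alpha j + 1 = RL alpha i"] by simp_all
qed

lemma dn_SomeD: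
  assumes "dn alpha i = Some j"
  shows "j < i" "RL alpha j = RL alpha i + 1"
proof -
  obtain k where "k < i" "RL alpha k = RL alpha i + 1"
    and "j = (GREATEST j. j < i \<and> RL alpha j = RL alpha i + 1)"
    using assms unfolding dn_def by (auto split: if_splits)
  then show "j < i" "RL alpha j = RL alpha i + 1"
    using GREATEST_less_nat[where Q = "\<lambda>j. RL alpha j = RL alpha i + 1"] by simp_all
qed

lemma un_defined:
  assumes "i < length alpha" "2 \<le> RL alpha i"
  shows "\<exists>j. un alpha i = Some j"
  using RL_predecessor[OF assms] unfolding un_def by auto

lemma un_mono:
  assumes "k \<le> i" "RL alpha k = RL alpha i" "un alpha k = Some a" "un alpha i = Some b"
  shows "a \<le> b"
  using un_SomeD[OF assms(3)] un_SomeD(3)[OF assms(4)] assms(1,2) by simp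

lemma un_pow_Suc_right: "un_pow alpha (Suc n) i = Option.bind (un alpha i) (un_pow alpha n)"
proof (induction n arbitrary: i)
  case 0
  then show ?case by (cases "un alpha i") simp_all
next
  case (Suc n)
  have "un_pow alpha (Suc (Suc n)) i
      = Option.bind (Option.bind (un alpha i) (un_pow alpha n)) (un alpha)"
    using Suc by simp
  also have "\<dots> = Option.bind (un alpha i) (\<lambda>y. un_pow alpha (Suc n) y)"
    by (simp add: Option.bind_assoc)
  finally show ?case .
qed

lemma un_pow_defined:
  assumes "i < length alpha" "n < RL alpha i"
  shows "\<exists>x. un_pow alpha n i = Some x \<and> x < length alpha \<and> RL alpha x + n = RL alpha i"
  using assms(2)
proof (induction n)
  case 0
  then show ?case using assms(1) by simp
next
  case (Suc n)
  then obtain x where x: "un_pow alpha n i = Some x" "x < length alpha"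
    "RL alpha x + n = RL alpha i"
    by auto
  then obtain j where j: "un alpha x = Some j"
    using un_defined[OF x(2)] Suc.prems by auto
  show ?case
    using x j un_SomeD[OF j] by auto
qed

lemma un_pow_mono:
  assumes "k \<le> i" "i < length alpha" "RL alpha k = RL alpha i" "n < RL alpha i"
    "un_pow alpha n k = Some a" "un_pow alpha n i = Some b"
  shows "a \<le> b \<and> RL alpha a = RL alpha b"
  using assms(4-6)
proof (induction n arbitrary: a b)
  case 0
  then show ?case using assms(1,3) by simp
next
  case (Suc n)
  obtain x y where x: "un_pow alpha n k = Some x" and y: "un_pow alpha n i = Some y"
    using un_pow_defined[of k alpha n] un_pow_defined[of i alpha n] assms(1-3) Suc.prems(1)
    by fastforce
  have xy: "x \<le> y" "RL alpha x = RL alpha y"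
    using Suc.IH[OF _ x y] Suc.prems(1) by auto
  have a: "un alpha x = Some a" and b: "un alpha y = Some b"
    using Suc.prems(2,3) x y by auto
  show ?case
    using un_mono[OF xy a b] un_SomeD(2)[OF a] un_SomeD(2)[OF b] xy(2) by simp
qed

theorem lemma5:
  fixes alpha :: "real list" and m t :: nat
  assumes "num_hlists alpha = m" and "1 \<le> t" and "t < m"
  shows "(\<forall>i \<in> Left alpha t. \<forall>j. dn alpha i = Some j \<longrightarrow> j \<in> Left alpha (t + 1))
       \<and> (\<forall>i \<in> Right alpha (t + 1). \<exists>j. un alpha i = Some j \<and> j \<in> Right alpha t)"
proof (intro conjI ballI allI impI)
  fix i j
  assume "i \<in> Left alpha t" and dn: "dn alpha i = Some j"
  then have i: "i < length alpha" "RL alpha i = t" "un_pow alpha (t - 1) i = Some 0"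
    unfolding Left_def hlist_def by auto
  have j: "j < i" "RL alpha j = t + 1"
    using dn_SomeD[OF dn] i(2) by auto
  then obtain k where k: "un alpha j = Some k"
    using un_defined[of j alpha] i(1) assms(2) by auto
  have "k < i" "RL alpha k = t"
    using un_SomeD[OF k] j by auto
  then obtain a where a: "un_pow alpha (t - 1) k = Some a"
    using un_pow_defined[of k alpha "t - 1"] i(1) assms(2) by auto
  have "a \<le> 0"
    using un_pow_mono[OF _ i(1) _ _ a i(3)] \<open>k < i\<close> \<open>RL alpha k = t\<close> i(2) assms(2)
    by simp
  then have "un_pow alpha t j = Some 0"
    using un_pow_Suc_right[of alpha "t - 1" j] k a assms(2) by simp
  then show "j \<in> Left alpha (t + 1)"
    unfolding Left_def hlist_def using j i(1) by simp
next
  fix i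
  assume "i \<in> Right alpha (t + 1)"
  then have i: "i < length alpha" "RL alpha i = t + 1" "un_pow alpha t i \<noteq> Some 0"
    unfolding Right_def hlist_def by auto
  then obtain j where j: "un alpha i = Some j"
    using un_defined[of i alpha] assms(2) by auto
  have "un_pow alpha (t - 1) j \<noteq> Some 0"
    using un_pow_Suc_right[of alpha "t - 1" i] i(3) j assms(2) by simp
  then show "\<exists>j. un alpha i = Some j \<and> j \<in> Right alpha t"
    using j un_SomeD[OF j] i unfolding Right_def hlist_def by auto
qed

end
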